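(* Let $X$ be a topological quandle and let $\{X_\alpha\}$ be the decomposition of $X$ into its path components. Then $H_n(X)\cong\bigoplus_\alpha H_n(X_\alpha)$ for every $n$, where $H_n(X_\alpha)$ is the homology of the subcomplex of $C_*(X)$ spanned by singular simplices with image in $X_\alpha$.
   Context: A quandle is a set with a binary operation $\triangleright$ such that $x\triangleright x=x$, each $\beta_y(x)=x\triangleright y$ is bijective, and $(x\triangleright y)\triangleright z=(x\triangleright z)\triangleright(y\triangleright z)$. A topological quandle is a topological space with a continuous quandle operation such that every $\beta_y$ is a homeomorphism. Let $\Delta^n$ have vertices $e_0,\dots,e_n$ ($\Delta^{n-1}$ has vertices $\bar e_0,\dots,\bar e_{n-1}$). For a singular $n$-simplex $\sigma:\Delta^n\to X$ write $\sigma=\sigma_{[x_1,\dots,x_{n+1}]}$ with $x_i=\sigma(e_{i-1})$; singular simplices are combined pointwise by $(\sigma\triangleright\tau)(t)=\sigma(t)\triangleright\tau(t)$. $C_n(X)$ is the free abelian group on singular $n$-simplices. For $2\le i\le n+1$, $d_i\sigma$ is $\sigma$ restricted to the face omitting $e_{i-1}$ (via $\bar e_j\mapsto e_j$ for $j\le i-2$, $\bar e_j\mapsto e_{j+1}$ for $j\ge i-1$), and $s_i\sigma=\sigma\circ\iota_i$ with $\iota_i(\sum t_j\bar e_j)=(\sum_{k=0}^{i-2}t_k)e_{i-1}+\sum_{j=i-1}^{n-1}t_je_{j+1}$. The boundary is $\partial_n\sigma=\sum_{i=2}^{n+1}(-1)^i(d_i\sigma-d_i\sigma\triangleright s_i\sigma)$,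 extended linearly ($\partial_0=0$); $H_n(X)$ is the $n$-th homology of $(C_*(X),\partial)$. *)

theory Defs
  imports "HOL-Homology.Homology" "HOL-Algebra.Product_Groups"
begin

definition quandle_on :: "'a set \<Rightarrow> ('a \<Rightarrow> 'a \<Rightarrow> 'a) \<Rightarrow> bool" where
  "quandle_on S tr \<equiv>
     (\<forall>x\<in>S. \<forall>y\<in>S. tr x y \<in> S)
   \<and> (\<forall>x\<in>S. tr x x = x)
   \<and> (\<forall>y\<in>S. bij_betw (\<lambda>x. tr x y) S S)
   \<and> (\<forall>x\<in>S. \<forall>y\<in>S. \<forall>z\<in>S. tr (tr x y) z = tr (tr x z) (tr y z))"

definition topological_quandle :: "'a topology \<Rightarrow> ('a \<Rightarrow> 'a \<Rightarrow> 'a) \<Rightarrow> bool" where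
  "topological_quandle X tr \<equiv>
     quandle_on (topspace X) tr
   \<and> continuous_map (prod_topology X X) X (\<lambda>(x, y). tr x y)
   \<and> (\<forall>y\<in>topspace X. homeomorphic_map X X (\<lambda>x. tr x y))"

text \<open>The map iota_i : Delta^{n-1} -> Delta^n, with k = i - 1 (so 1 <= k <= n):
  coordinates l < k are 0, coordinate k collects t_0 + ... + t_{k-1},
  coordinate l > k is t_{l-1}.\<close>
definition qdegen_map :: "nat \<Rightarrow> (nat \<Rightarrow> real) \<Rightarrow> nat \<Rightarrow> real" where
  "qdegen_map k x \<equiv> \<lambda>l. if l < k then 0 else if l = k then sum x {..<k} else x (l - 1)"

definition qdegen :: "nat \<Rightarrow> nat \<Rightarrow> ((nat \<Rightarrow> real) \<Rightarrow> 'a) \<Rightarrow> (nat \<Rightarrow> real) \<Rightarrow> 'a" where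
  "qdegen n k f \<equiv> restrict (f \<circ> qdegen_map k) (standard_simplex (n - 1))"

definition qsimplex_op :: "('a \<Rightarrow> 'a \<Rightarrow> 'a) \<Rightarrow> nat \<Rightarrow> ((nat \<Rightarrow> real) \<Rightarrow> 'a)
     \<Rightarrow> ((nat \<Rightarrow> real) \<Rightarrow> 'a) \<Rightarrow> (nat \<Rightarrow> real) \<Rightarrow> 'a" where
  "qsimplex_op tr m f g \<equiv> restrict (\<lambda>t. tr (f t) (g t)) (standard_simplex m)"

text \<open>Boundary of a singular n-simplex: sum over i = 2..n+1, i.e. k = i-1 in {1..n},
  of (-1)^i (d_i sigma - d_i sigma \<triangleright> s_i sigma). Here d_i sigma = singular_face n (i-1) sigma.\<close>
definition qboundary_simplex :: "('a \<Rightarrow> 'a \<Rightarrow> 'a) \<Rightarrow> nat \<Rightarrow> ((nat \<Rightarrow> real) \<Rightarrow> 'a) \<Rightarrow> 'a chain" where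
  "qboundary_simplex tr n f \<equiv>
     (\<Sum>k\<in>{1..n}. frag_cmul ((-1) ^ (k + 1))
        (frag_of (singular_face n k f)
         - frag_of (qsimplex_op tr (n - 1) (singular_face n k f) (qdegen n k f))))"

definition qboundary :: "('a \<Rightarrow> 'a \<Rightarrow> 'a) \<Rightarrow> nat \<Rightarrow> 'a chain \<Rightarrow> 'a chain" where
  "qboundary tr n c \<equiv> frag_extend (qboundary_simplex tr n) c"

definition qcycle_group :: "('a \<Rightarrow> 'a \<Rightarrow> 'a) \<Rightarrow> nat \<Rightarrow> 'a topology \<Rightarrow> 'a chain monoid" where
  "qcycle_group tr n X \<equiv>
     subgroup_generated (chain_group n X) {c \<in> singular_chain_set n X. qboundary tr n c = 0}"

definition qboundary_set :: "('a \<Rightarrow> 'a \<Rightarrow> 'a) \<Rightarrow> nat \<Rightarrow> 'a topology \<Rightarrow> 'a chain set" where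
  "qboundary_set tr n X \<equiv> qboundary tr (Suc n) ` singular_chain_set (Suc n) X"

text \<open>Quandle homology H_n: cycles modulo boundaries. Applied to subtopology X C this is the
  homology of the subcomplex spanned by singular simplices with image in C.\<close>
definition qhomology_group :: "('a \<Rightarrow> 'a \<Rightarrow> 'a) \<Rightarrow> nat \<Rightarrow> 'a topology \<Rightarrow> 'a chain set monoid" where
  "qhomology_group tr n X \<equiv> qcycle_group tr n X Mod qboundary_set tr n X"

end

theory Submission
  imports Defs
begin

text \<open>
  If \<open>a\<close> lies in a path
  component \<open>S\<close>, the path-connected set \<open>a \<triangleright> S\<close> contains \<open>a \<triangleright> a = a\<close>, so it lies in
  \<open>S\<close>: path components are closed under \<open>\<triangleright>\<close>. Hence for a simplex \<open>\<sigma>\<close> with image in \<open>S\<close>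
  all of \<open>d\<^sub>i \<sigma>\<close> and \<open>d\<^sub>i \<sigma> \<triangleright> s\<^sub>i \<sigma>\<close> have image in \<open>S\<close>, and the boundary commutes with the
  projections of \<open>C\<^sub>*(X) = \<Oplus>\<^sub>S C\<^sub>*(X\<^sub>S)\<close>. So a chain is a cycle (a boundary) iff all its
  components are, and sending a cycle to the family of classes of its components induces
  \<open>H\<^sub>n(X) \<cong> \<Oplus>\<^sub>S H\<^sub>n(X\<^sub>S)\<close>.
\<close>


section \<open>Quandle boundaries of singular chains\<close>

lemma continuous_map_pointwise_op:
  assumes "continuous_map (prod_topology X X) X (\<lambda>(x, y). tr x y)"
    and "continuous_map Y X f" and "continuous_map Y X g"
  shows "continuous_map Y X (\<lambda>t. tr (f t) (g t))"
  using continuous_map_compose[of Y "prod_topology X X" "\<lambda>t. (f t, g t)" X "\<lambda>(x, y). tr x y"] assms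
  by (simp add: continuous_map_pairwise o_def)

lemma continuous_map_op_subtopology:
  assumes cont: "continuous_map (prod_topology X X) X (\<lambda>(x, y). tr x y)"
    and closed: "\<And>a b. a \<in> S \<Longrightarrow> b \<in> S \<Longrightarrow> tr a b \<in> S"
  shows "continuous_map (prod_topology (subtopology X S) (subtopology X S)) (subtopology X S)
           (\<lambda>(x, y). tr x y)"
  using continuous_map_from_subtopology[OF cont, of "S \<times> S"] closed
  by (auto simp: continuous_map_in_subtopology simp flip: subtopology_Times)

lemma sum_qdegen_map:
  assumes "1 \<le> k" "k \<le> Suc p"
  shows "(\<Sum>l\<le>Suc p. qdegen_map k x l) = (\<Sum>j\<le>p. x j)"
proof -
  have q: "qdegen_map k x = (\<lambda>l. (if l = k then (\<Sum>j<k. x j) else 0) + (if k < l then x (l - 1) else 0))"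
    by (auto simp: qdegen_map_def fun_eq_iff)
  have "{..p} \<inter> {..<k} = {..<k}"
    using assms by auto
  then have first: "(\<Sum>l\<le>Suc p. if l = k then (\<Sum>j<k. x j) else 0) = (\<Sum>j\<le>p. if j < k then x j else 0)"
    using assms sum.inter_restrict[of "{..p}" x "{..<k}"] by simp
  have second: "(\<Sum>l\<le>Suc p. if k < l then x (l - 1) else 0) = (\<Sum>j\<le>p. if k \<le> j then x j else 0)"
    by (simp only: sum.atMost_Suc_shift less_Suc_eq_le diff_Suc_1) simp
  have split: "(if j < k then x j else 0) + (if k \<le> j then x j else 0) = x j" for j
    by auto
  have "(\<Sum>l\<le>Suc p. qdegen_map k x l)
      = (\<Sum>l\<le>Suc p. if l = k then (\<Sum>j<k. x j) else 0) + (\<Sum>l\<le>Suc p. if k < l then x (l - 1) else 0)"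
    by (simp only: q sum.distrib)
  also have "\<dots> = (\<Sum>j\<le>p. (if j < k then x j else 0) + (if k \<le> j then x j else 0))"
    by (simp only: first second sum.distrib)
  finally show ?thesis
    by (simp only: split)
qed

lemma qdegen_map_in_standard_simplex:
  assumes k: "1 \<le> k" "k \<le> m" and x: "x \<in> standard_simplex (m - 1)"
  shows "qdegen_map k x \<in> standard_simplex m"
proof -
  obtain p where m: "m = Suc p"
    using k by (cases m) auto
  have x0: "\<And>i. 0 \<le> x i" and x_vanish: "\<And>i. p < i \<Longrightarrow> x i = 0" and x1: "(\<Sum>j\<le>p. x j) = 1"
    using x m by (auto simp: standard_simplex_def)
  have nonneg: "0 \<le> qdegen_map k x l" for l
    using x0 by (simp add: qdegen_map_def sum_nonneg)
  have vanish: "qdegen_map k x l = 0" if "m < l" for l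
    using x_vanish that k m by (simp add: qdegen_map_def)
  have total: "(\<Sum>l\<le>m. qdegen_map k x l) = 1"
    using sum_qdegen_map[of k p x] k m x1 by simp
  have "qdegen_map k x l \<le> 1" for l
  proof (cases "l \<le> m")
    case True
    then show ?thesis
      using member_le_sum[of l "{..m}" "qdegen_map k x"] nonneg total by simp
  qed (simp add: vanish)
  then show ?thesis
    using nonneg vanish total by (simp add: standard_simplex_def)
qed

lemma continuous_map_qdegen_map:
  assumes "1 \<le> k" "k \<le> m"
  shows "continuous_map (subtopology (powertop_real UNIV) (standard_simplex (m - 1)))
           (subtopology (powertop_real UNIV) (standard_simplex m)) (qdegen_map k)"
proof (clarsimp simp add: continuous_map_in_subtopology qdegen_map_in_standard_simplex[OF assms]
                          continuous_map_componentwise)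
  fix l
  have "continuous_map (powertop_real UNIV) euclideanreal
          (\<lambda>x. if l < k then 0 else if l = k then sum x {..<k} else x (l - 1))"
    by (auto intro!: continuous_map_product_projection continuous_map_sum)
  then show "continuous_map (subtopology (powertop_real UNIV) (standard_simplex (m - Suc 0)))
               euclideanreal (\<lambda>x. qdegen_map k x l)"
    by (simp add: qdegen_map_def continuous_map_from_subtopology)
qed

lemma singular_simplex_qdegen:
  assumes "singular_simplex m X f" "1 \<le> k" "k \<le> m"
  shows "singular_simplex (m - 1) X (qdegen m k f)"
  using continuous_map_compose[OF continuous_map_qdegen_map[OF assms(2,3)]] assms(1)
  by (auto simp: singular_simplex_def qdegen_def)

lemma singular_simplex_qsimplex_op:
  assumes "continuous_map (prod_topology X X) X (\<lambda>(x, y). tr x y)"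
    and "singular_simplex m X f" and "singular_simplex m X g"
  shows "singular_simplex m X (qsimplex_op tr m f g)"
  using continuous_map_pointwise_op[OF assms(1), of _ f g] assms(2,3)
  by (simp add: singular_simplex_def qsimplex_op_def)

lemma qboundary_frag_of [simp]: "qboundary tr m (frag_of f) = qboundary_simplex tr m f"
  by (simp add: qboundary_def)

lemma qboundary_0 [simp]: "qboundary tr m 0 = 0"
  and qboundary_add: "qboundary tr m (a + b) = qboundary tr m a + qboundary tr m b"
  and qboundary_diff: "qboundary tr m (a - b) = qboundary tr m a - qboundary tr m b"
  by (simp_all add: qboundary_def frag_extend_add frag_extend_diff)

lemma qboundary_minus: "qboundary tr m (- a) = - qboundary tr m a"
  by (simp add: qboundary_def frag_extend_minus)

lemma qboundary_sum: "qboundary tr m (sum g I) = (\<Sum>i\<in>I. qboundary tr m (g i))"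
  by (cases "finite I") (simp_all add: qboundary_def frag_extend_sum o_def)

lemma singular_chain_qboundary:
  assumes cont: "continuous_map (prod_topology X X) X (\<lambda>(x, y). tr x y)"
    and c: "singular_chain m X c"
  shows "singular_chain (m - 1) X (qboundary tr m c)"
  unfolding qboundary_def
proof (rule singular_chain_extend)
  fix f
  assume "f \<in> Poly_Mapping.keys c"
  then have f: "singular_simplex m X f"
    using c by (auto simp: singular_chain_def)
  have "singular_simplex (m - 1) X (singular_face m k f)"
    and "singular_simplex (m - 1) X (qsimplex_op tr (m - 1) (singular_face m k f) (qdegen m k f))"
    if "k \<in> {1..m}" for k
    using that singular_simplex_singular_face[OF f] singular_simplex_qdegen[OF f]
          singular_simplex_qsimplex_op[OF cont] by auto
  then show "singular_chain (m - 1) X (qboundary_simplex tr m f)"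
    unfolding qboundary_simplex_def
    by (intro singular_chain_sum singular_chain_cmul singular_chain_diff) (auto simp: singular_chain_of)
qed

section \<open>Splitting singular chains along path components\<close>

lemma mem_path_components_of_iff:
  "S \<in> path_components_of X \<Longrightarrow> x \<in> topspace X \<Longrightarrow> x \<in> S \<longleftrightarrow> S = path_component_of_set X x"
  by (auto simp: path_components_of_def path_component_of_equiv)

text \<open>
  A singular simplex lies in the path component of its vertex \<open>e\<^sub>0\<close>, so testing that vertex
  projects \<open>C\<^sub>*(X)\<close> onto \<open>C\<^sub>*(X\<^sub>S)\<close>.
\<close>

definition vertex0 :: "nat \<Rightarrow> real" where
  "vertex0 = (\<lambda>j. if j = 0 then 1 else 0)"

lemma vertex0_in_standard_simplex [simp]: "vertex0 \<in> standard_simplex p"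
  by (simp add: vertex0_def)

lemma singular_simplex_vertex0_in_topspace:
  "singular_simplex p X f \<Longrightarrow> f vertex0 \<in> topspace X"
  using vertex0_in_standard_simplex by (auto simp: singular_simplex_def continuous_map_def)

lemma singular_simplex_in_path_component:
  assumes f: "singular_simplex p X f" and S: "S \<in> path_components_of X" and "f vertex0 \<in> S"
  shows "singular_simplex p (subtopology X S) f"
proof -
  have "continuous_map (subtopology (powertop_real UNIV) (standard_simplex p)) X f"
    using f by (simp add: singular_simplex_def)
  then have "path_connectedin X (f ` standard_simplex p)"
    by (simp add: path_connectedin_continuous_map_image path_connectedin_standard_simplex)
  moreover have "\<not> disjnt S (f ` standard_simplex p)"
    using \<open>f vertex0 \<in> S\<close> by (auto simp: disjnt_def)
  ultimately show ?thesis
    using f path_components_of_maximal[OF S] by (simp add: singular_simplex_subtopology)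
qed

definition component_part :: "'a set \<Rightarrow> 'a chain \<Rightarrow> 'a chain" where
  "component_part S c = frag_extend (\<lambda>f. if f vertex0 \<in> S then frag_of f else 0) c"

lemma component_part_0 [simp]: "component_part S 0 = 0"
  and component_part_diff: "component_part S (a - b) = component_part S a - component_part S b"
  and component_part_add: "component_part S (a + b) = component_part S a + component_part S b"
  and component_part_sum: "component_part S (sum g I) = (\<Sum>i\<in>I. component_part S (g i))"
  by (simp_all add: component_part_def frag_extend_diff frag_extend_add)
     (cases "finite I"; simp add: frag_extend_sum o_def)

lemma singular_chain_component_part:
  assumes c: "singular_chain p X c" and S: "S \<in> path_components_of X"
  shows "singular_chain p (subtopology X S) (component_part S c)"
  unfolding component_part_def
proof (rule singular_chain_extend)
  fix f
  assume "f \<in> Poly_Mapping.keys c"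
  then have "singular_simplex p X f"
    using c by (auto simp: singular_chain_def)
  then show "singular_chain p (subtopology X S) (if f vertex0 \<in> S then frag_of f else 0)"
    using singular_simplex_in_path_component[OF _ S] by (simp add: singular_chain_of)
qed

lemma component_part_subtopology:
  assumes c: "singular_chain p (subtopology X T) c"
    and S: "S \<in> path_components_of X" and T: "T \<in> path_components_of X"
  shows "component_part S c = (if S = T then c else 0)"
proof -
  have "f vertex0 \<in> S \<longleftrightarrow> S = T" if "f \<in> Poly_Mapping.keys c" for f
  proof -
    have "f vertex0 \<in> T"
      using c that vertex0_in_standard_simplex by (fastforce simp: singular_chain_subtopology)
    then show ?thesis
      using path_components_of_disjoint[OF S T] by (auto simp: disjnt_def)
  qed
  then have "component_part S c = frag_extend (\<lambda>f. if S = T then frag_of f else 0) c"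
    unfolding component_part_def by (intro frag_extend_eq) simp
  then show ?thesis
    by (simp flip: frag_expansion) (simp add: frag_extend_eq_0)
qed

lemma component_part_sum_subtopology:
  assumes "finite F" "F \<subseteq> path_components_of X" and T: "T \<in> path_components_of X"
    and w: "\<And>S. S \<in> F \<Longrightarrow> singular_chain p (subtopology X S) (w S)"
  shows "component_part T (\<Sum>S\<in>F. w S) = (if T \<in> F then w T else 0)"
proof -
  have "component_part T (\<Sum>S\<in>F. w S) = (\<Sum>S\<in>F. if T = S then w S else 0)"
    unfolding component_part_sum
  proof (rule sum.cong[OF refl])
    fix S
    assume "S \<in> F"
    then show "component_part T (w S) = (if T = S then w S else 0)"
      using assms(2) component_part_subtopology[OF w T] by blast
  qed
  then show ?thesis
    using assms(1) by simp
qed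

lemma sum_component_parts:
  assumes F: "finite F" "F \<subseteq> path_components_of X"
    and cover: "\<And>f. f \<in> Poly_Mapping.keys c \<Longrightarrow> f vertex0 \<in> \<Union>F"
  shows "(\<Sum>S\<in>F. component_part S c) = c"
proof -
  have "Poly_Mapping.keys c \<subseteq> Poly_Mapping.keys c"
    by simp
  then show ?thesis
  proof (induction c rule: frag_induction)
    case (one f)
    then obtain T where T: "T \<in> F" "f vertex0 \<in> T"
      using cover by blast
    have "f vertex0 \<in> S \<longleftrightarrow> S = T" if "S \<in> F" for S
      using T that F(2) path_components_of_disjoint[of S X T] by (auto simp: disjnt_def)
    then have "(\<Sum>S\<in>F. component_part S (frag_of f)) = (\<Sum>S\<in>F. if S = T then frag_of f else 0)"
      by (intro sum.cong) (simp_all add: component_part_def)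
    also have "\<dots> = frag_of f"
      using T F(1) by simp
    finally show ?case .
  qed (simp_all add: component_part_diff sum_subtractf)
qed

lemma singular_chain_decompose_path_components:
  assumes c: "singular_chain p X c"
  obtains F where "finite F" "F \<subseteq> path_components_of X"
    and "\<And>S. S \<in> path_components_of X - F \<Longrightarrow> component_part S c = 0"
    and "(\<Sum>S\<in>F. component_part S c) = c"
proof -
  define F where "F = (\<lambda>f. path_component_of_set X (f vertex0)) ` Poly_Mapping.keys c"
  have vertex: "f vertex0 \<in> topspace X" if "f \<in> Poly_Mapping.keys c" for f
    using c that singular_simplex_vertex0_in_topspace by (auto simp: singular_chain_def)
  have fin: "finite F"
    by (simp add: F_def)
  have F: "F \<subseteq> path_components_of X"
    using vertex by (auto simp: F_def path_component_in_path_components_of)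
  have "component_part S c = 0" if "S \<in> path_components_of X - F" for S
    unfolding component_part_def
    using that vertex by (intro frag_extend_eq_0) (auto simp: F_def mem_path_components_of_iff)
  moreover have "f vertex0 \<in> \<Union>F" if "f \<in> Poly_Mapping.keys c" for f
  proof -
    have "f vertex0 \<in> path_component_of_set X (f vertex0)"
      using vertex[OF that] by (simp add: path_component_of_refl)
    moreover have "path_component_of_set X (f vertex0) \<in> F"
      using that by (simp add: F_def)
    ultimately show ?thesis
      by blast
  qed
  then have "(\<Sum>S\<in>F. component_part S c) = c"
    by (rule sum_component_parts[OF fin F])
  ultimately show thesis
    using that fin F by blast
qed

section \<open>Quotients of subgroups by normal subgroups of the ambient group\<close>

lemma (in group) rcos_eq_iff_mult_inv:
  assumes "subgroup H G" "x \<in> carrier G" "y \<in> carrier G"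
  shows "H #> x = H #> y \<longleftrightarrow> x \<otimes> inv y \<in> H"
proof
  have H: "H \<subseteq> carrier G" and xy: "x \<otimes> inv y \<in> carrier G"
    using assms subgroup.subset by auto
  show "x \<otimes> inv y \<in> H" if "H #> x = H #> y"
    using coset_mult_inv2[OF that assms(2,3) H] coset_join1[OF _ xy assms(1)] by blast
  show "H #> x = H #> y" if "x \<otimes> inv y \<in> H"
    using coset_join2[OF xy assms(1) that] coset_mult_inv1[OF _ assms(2,3) H] by blast
qed

lemma (in normal) r_coset_epi_Mod_subgroup_generated:
  assumes "subgroup K G"
  shows "(\<lambda>a. H #> a) \<in> epi (subgroup_generated G K) (subgroup_generated G K Mod H)"
proof -
  have K: "carrier (subgroup_generated G K) = K"
    by (rule subgroup.carrier_subgroup_generated_subgroup[OF assms])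
  have sg: "r_coset (subgroup_generated G K) = r_coset G"
    "set_mult (subgroup_generated G K) = set_mult G"
    "monoid.mult (subgroup_generated G K) = monoid.mult G"
    by (simp_all add: subgroup_generated_def fun_eq_iff)
  have "H #> (a \<otimes> b) = (H #> a) <#> (H #> b)" if "a \<in> K" "b \<in> K" for a b
    using that subgroup.mem_carrier[OF assms] by (simp add: rcos_sum)
  then show ?thesis
    unfolding epi_def hom_def carrier_FactGroup K by (auto simp: sg)
qed

lemma (in normal) group_Mod_subgroup_generated:
  assumes "subgroup K G"
  shows "group (subgroup_generated G K Mod H)"
proof -
  let ?K = "subgroup_generated G K"
  have epi: "(\<lambda>a. H #> a) \<in> epi ?K (?K Mod H)"
    by (rule r_coset_epi_Mod_subgroup_generated[OF assms])
  then have "(\<lambda>a. H #> a) \<in> hom ?K (?K Mod H)"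
    unfolding epi_def by blast
  then have "group ((?K Mod H)\<lparr>carrier := (\<lambda>a. H #> a) ` carrier ?K, one := H #> \<one>\<^bsub>?K\<^esub>\<rparr>)"
    by (rule group.hom_imp_img_group[OF group_subgroup_generated])
  moreover have "H #> \<one>\<^bsub>?K\<^esub> = H"
    by (simp add: subgroup_generated_def subset)
  ultimately show ?thesis
    using epi by (simp add: epi_def FactGroup_def)
qed

lemma iso_of_epis_with_same_fibres:
  assumes "monoid G" and \<pi>: "\<pi> \<in> epi G Q" and \<phi>: "\<phi> \<in> epi G H"
    and fibres: "\<And>x y. x \<in> carrier G \<Longrightarrow> y \<in> carrier G \<Longrightarrow> \<pi> x = \<pi> y \<longleftrightarrow> \<phi> x = \<phi> y"
  shows "Q \<cong> H"
proof -
  define \<psi> where "\<psi> q = \<phi> (inv_into (carrier G) \<pi> q)" for q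
  have \<psi>: "\<psi> (\<pi> x) = \<phi> x" if "x \<in> carrier G" for x
    unfolding \<psi>_def using that by (intro fibres[THEN iffD1]) (auto simp: inv_into_into f_inv_into_f)
  have Q: "carrier Q = \<pi> ` carrier G" and H: "carrier H = \<phi> ` carrier G"
    using \<pi> \<phi> by (auto simp: epi_def)
  have "\<psi> \<in> hom Q H"
  proof (rule homI)
    fix q
    assume "q \<in> carrier Q"
    then obtain x where "x \<in> carrier G" "q = \<pi> x"
      using Q by blast
    then show "\<psi> q \<in> carrier H"
      using H \<psi> by blast
  next
    fix q q'
    assume "q \<in> carrier Q" "q' \<in> carrier Q"
    then obtain x y where "x \<in> carrier G" "y \<in> carrier G" "q = \<pi> x" "q' = \<pi> y"
      using Q by blast
    moreover have "\<pi> x \<otimes>\<^bsub>Q\<^esub> \<pi> y = \<pi> (x \<otimes>\<^bsub>G\<^esub> y)" "\<phi> x \<otimes>\<^bsub>H\<^esub> \<phi> y = \<phi> (x \<otimes>\<^bsub>G\<^esub> y)"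
      using calculation \<pi> \<phi> hom_mult[of \<pi> G Q x y] hom_mult[of \<phi> G H x y] by (auto simp: epi_def)
    ultimately show "\<psi> (q \<otimes>\<^bsub>Q\<^esub> q') = \<psi> q \<otimes>\<^bsub>H\<^esub> \<psi> q'"
      using \<psi> monoid.m_closed[OF \<open>monoid G\<close>] by simp
  qed
  moreover have "inj_on \<psi> (carrier Q)"
  proof (rule inj_onI)
    fix q q'
    assume "q \<in> carrier Q" "q' \<in> carrier Q" "\<psi> q = \<psi> q'"
    moreover obtain x y where "x \<in> carrier G" "y \<in> carrier G" "q = \<pi> x" "q' = \<pi> y"
      using Q calculation(1,2) by blast
    ultimately show "q = q'"
      using \<psi> fibres by simp
  qed
  moreover have "\<psi> ` carrier Q = carrier H"
    unfolding Q H image_image using \<psi> by (rule image_cong[OF refl])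
  ultimately show ?thesis
    unfolding is_iso_def iso_def bij_betw_def by blast
qed

section \<open>Quandle cycles, boundaries and homology classes\<close>

lemma subgroup_qcycles: "subgroup {c \<in> singular_chain_set n Y. qboundary tr n c = 0} (chain_group n Y)"
proof (rule group.subgroupI)
  fix a b
  assume a: "a \<in> {c \<in> singular_chain_set n Y. qboundary tr n c = 0}"
    and b: "b \<in> {c \<in> singular_chain_set n Y. qboundary tr n c = 0}"
  then show "inv\<^bsub>chain_group n Y\<^esub> a \<in> {c \<in> singular_chain_set n Y. qboundary tr n c = 0}"
    by (simp add: singular_chain_def qboundary_minus singular_chain_minus)
  show "a \<otimes>\<^bsub>chain_group n Y\<^esub> b \<in> {c \<in> singular_chain_set n Y. qboundary tr n c = 0}"
    using a b by (simp add: qboundary_add singular_chain_add)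
qed auto

lemma carrier_qcycle_group [simp]:
  "carrier (qcycle_group tr n Y) = {c \<in> singular_chain_set n Y. qboundary tr n c = 0}"
  unfolding qcycle_group_def by (rule subgroup.carrier_subgroup_generated_subgroup[OF subgroup_qcycles])

lemma mult_qcycle_group [simp]: "monoid.mult (qcycle_group tr n Y) = (+)"
  by (simp add: qcycle_group_def)

lemma qboundary_hom:
  assumes "continuous_map (prod_topology Y Y) Y (\<lambda>(x, y). tr x y)"
  shows "qboundary tr (Suc n) \<in> hom (chain_group (Suc n) Y) (chain_group n Y)"
  using singular_chain_qboundary[OF assms, of "Suc n"] by (auto intro!: homI simp: qboundary_add)

lemma subgroup_qboundary_set:
  assumes "continuous_map (prod_topology Y Y) Y (\<lambda>(x, y). tr x y)"
  shows "subgroup (qboundary_set tr n Y) (chain_group n Y)"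
proof -
  interpret group_hom "chain_group (Suc n) Y" "chain_group n Y" "qboundary tr (Suc n)"
    by (simp add: group_hom_def group_hom_axioms_def qboundary_hom[OF assms])
  show ?thesis
    using img_is_subgroup by (simp add: qboundary_set_def)
qed

definition qhomology_class :: "('a \<Rightarrow> 'a \<Rightarrow> 'a) \<Rightarrow> nat \<Rightarrow> 'a topology \<Rightarrow> 'a chain \<Rightarrow> 'a chain set" where
  "qhomology_class tr n Y z = qboundary_set tr n Y #>\<^bsub>chain_group n Y\<^esub> z"

lemma qhomology_class_0 [simp]: "qhomology_class tr n Y 0 = qboundary_set tr n Y"
  by (auto simp: qhomology_class_def r_coset_def)

lemma qhomology_class_eq_iff:
  assumes "continuous_map (prod_topology Y Y) Y (\<lambda>(x, y). tr x y)"
    and "singular_chain n Y z" "singular_chain n Y z'"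
  shows "qhomology_class tr n Y z = qhomology_class tr n Y z' \<longleftrightarrow> z - z' \<in> qboundary_set tr n Y"
  using group.rcos_eq_iff_mult_inv[OF group_chain_group subgroup_qboundary_set[OF assms(1)]] assms(2,3)
  by (simp add: qhomology_class_def singular_chain_def)

text \<open>
  No \<open>\<partial> \<circ> \<partial> = 0\<close> is needed: \<open>qhomology_group\<close> consists of the cosets \<open>B + z\<close> of cycles,
  i.e. it is the image of the cycles in the quotient of the chain group by the boundaries.
\<close>

lemma normal_qboundary_set:
  assumes "continuous_map (prod_topology Y Y) Y (\<lambda>(x, y). tr x y)"
  shows "qboundary_set tr n Y \<lhd> chain_group n Y"
  by (rule comm_group.subgroup_imp_normal[OF abelian_chain_group subgroup_qboundary_set[OF assms]])

lemma qhomology_class_epi: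
  assumes "continuous_map (prod_topology Y Y) Y (\<lambda>(x, y). tr x y)"
  shows "qhomology_class tr n Y \<in> epi (qcycle_group tr n Y) (qhomology_group tr n Y)"
  using normal.r_coset_epi_Mod_subgroup_generated[OF normal_qboundary_set[OF assms] subgroup_qcycles]
  by (simp add: qhomology_group_def qcycle_group_def qhomology_class_def[abs_def])

lemma group_qhomology_group:
  assumes "continuous_map (prod_topology Y Y) Y (\<lambda>(x, y). tr x y)"
  shows "group (qhomology_group tr n Y)"
  using normal.group_Mod_subgroup_generated[OF normal_qboundary_set[OF assms] subgroup_qcycles]
  by (simp add: qhomology_group_def qcycle_group_def)

definition component_classes :: "('a \<Rightarrow> 'a \<Rightarrow> 'a) \<Rightarrow> nat \<Rightarrow> 'a topology \<Rightarrow> 'a chain \<Rightarrow> 'a set \<Rightarrow> 'a chain set"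
  where "component_classes tr n X z =
           (\<lambda>S\<in>path_components_of X. qhomology_class tr n (subtopology X S) (component_part S z))"

section \<open>Path components under a continuous idempotent operation\<close>

locale continuous_idempotent_operation =
  fixes X :: "'a topology" and tr :: "'a \<Rightarrow> 'a \<Rightarrow> 'a"
  assumes continuous_op: "continuous_map (prod_topology X X) X (\<lambda>(x, y). tr x y)"
    and op_idem: "\<And>x. x \<in> topspace X \<Longrightarrow> tr x x = x"
begin

lemma path_component_closed_under_op:
  assumes S: "S \<in> path_components_of X" and a: "a \<in> S" and b: "b \<in> S"
  shows "tr a b \<in> S"
proof -
  have aX: "a \<in> topspace X"
    using S a path_components_of_subset by blast
  have "continuous_map X X (tr a)"
    using continuous_map_pointwise_op[OF continuous_op, of X "\<lambda>_. a" "\<lambda>x. x"] aX by simp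
  then have "path_connectedin X (tr a ` S)"
    using path_connectedin_continuous_map_image path_connectedin_path_components_of[OF S] by blast
  moreover have "a \<in> tr a ` S"
    using a op_idem[OF aX] by force
  ultimately have "tr a ` S \<subseteq> S"
    using path_components_of_maximal[OF S] a by (auto simp: disjnt_iff)
  with b show ?thesis by blast
qed

lemma continuous_map_op_path_component:
  assumes S: "S \<in> path_components_of X"
  shows "continuous_map (prod_topology (subtopology X S) (subtopology X S)) (subtopology X S)
           (\<lambda>(x, y). tr x y)"
  using continuous_map_op_subtopology[OF continuous_op] path_component_closed_under_op[OF S]
  by blast

lemma component_part_qboundary:
  assumes c: "singular_chain m X c" and S: "S \<in> path_components_of X"
  shows "qboundary tr m (component_part S c) = component_part S (qboundary tr m c)"
proof -
  have "Poly_Mapping.keys c \<subseteq> singular_simplex_set m X"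
    using c by (simp add: singular_chain_def)
  then show ?thesis
  proof (induction c rule: frag_induction)
    case (one f)
    let ?T = "path_component_of_set X (f vertex0)"
    have f: "singular_simplex m X f"
      using one by simp
    have T: "?T \<in> path_components_of X"
      using singular_simplex_vertex0_in_topspace[OF f] by (simp add: path_component_in_path_components_of)
    have fT: "singular_chain m (subtopology X ?T) (frag_of f)"
      using singular_simplex_in_path_component[OF f T] singular_simplex_vertex0_in_topspace[OF f]
      by (simp add: singular_chain_of path_component_of_refl)
    from singular_chain_qboundary[OF continuous_map_op_path_component[OF T] fT]
    have "singular_chain (m - 1) (subtopology X ?T) (qboundary_simplex tr m f)"
      by simp
    then show ?case
      using component_part_subtopology[OF fT S T] component_part_subtopology[OF _ S T] by simp
  qed (simp_all add: component_part_diff qboundary_diff)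
qed

lemma component_part_qcycle:
  assumes z: "z \<in> carrier (qcycle_group tr n X)" and S: "S \<in> path_components_of X"
  shows "component_part S z \<in> carrier (qcycle_group tr n (subtopology X S))"
  using z singular_chain_component_part[OF _ S] component_part_qboundary[OF _ S] by auto

lemma qboundary_set_iff_component_parts:
  assumes w: "singular_chain n X w"
  shows "w \<in> qboundary_set tr n X \<longleftrightarrow>
           (\<forall>S\<in>path_components_of X. component_part S w \<in> qboundary_set tr n (subtopology X S))"
proof
  assume "w \<in> qboundary_set tr n X"
  then obtain d where d: "singular_chain (Suc n) X d" and w_eq: "w = qboundary tr (Suc n) d"
    by (auto simp: qboundary_set_def)
  show "\<forall>S\<in>path_components_of X. component_part S w \<in> qboundary_set tr n (subtopology X S)"
  proof
    fix S
    assume S: "S \<in> path_components_of X"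
    have "component_part S w = qboundary tr (Suc n) (component_part S d)"
      using component_part_qboundary[OF d S] w_eq by simp
    with singular_chain_component_part[OF d S] show "component_part S w \<in> qboundary_set tr n (subtopology X S)"
      by (auto simp: qboundary_set_def)
  qed
next
  assume parts: "\<forall>S\<in>path_components_of X. component_part S w \<in> qboundary_set tr n (subtopology X S)"
  obtain F where F: "F \<subseteq> path_components_of X" "(\<Sum>S\<in>F. component_part S w) = w"
    using singular_chain_decompose_path_components[OF w] by metis
  have "\<exists>d. singular_chain (Suc n) X d \<and> component_part S w = qboundary tr (Suc n) d" if S: "S \<in> F" for S
  proof -
    obtain d where "singular_chain (Suc n) (subtopology X S) d" "component_part S w = qboundary tr (Suc n) d"
      using parts F(1) S by (auto simp: qboundary_set_def)
    then show ?thesis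
      by (auto simp: singular_chain_subtopology)
  qed
  then obtain d where d: "\<And>S. S \<in> F \<Longrightarrow> singular_chain (Suc n) X (d S)"
    and parts_d: "\<And>S. S \<in> F \<Longrightarrow> component_part S w = qboundary tr (Suc n) (d S)"
    by metis
  have "w = qboundary tr (Suc n) (\<Sum>S\<in>F. d S)"
    using F(2) parts_d by (simp add: qboundary_sum)
  moreover have "singular_chain (Suc n) X (\<Sum>S\<in>F. d S)"
    using d by (simp add: singular_chain_sum)
  ultimately show "w \<in> qboundary_set tr n X"
    by (auto simp: qboundary_set_def)
qed

lemma component_classes_eq_iff:
  assumes z: "z \<in> carrier (qcycle_group tr n X)" and z': "z' \<in> carrier (qcycle_group tr n X)"
  shows "component_classes tr n X z = component_classes tr n X z' \<longleftrightarrow>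
           qhomology_class tr n X z = qhomology_class tr n X z'"
proof -
  have "qhomology_class tr n (subtopology X S) (component_part S z)
          = qhomology_class tr n (subtopology X S) (component_part S z')
        \<longleftrightarrow> component_part S (z - z') \<in> qboundary_set tr n (subtopology X S)"
    if S: "S \<in> path_components_of X" for S
  proof -
    have "singular_chain n (subtopology X S) (component_part S z)"
      and "singular_chain n (subtopology X S) (component_part S z')"
      using component_part_qcycle[OF z S] component_part_qcycle[OF z' S] by simp_all
    from qhomology_class_eq_iff[OF continuous_map_op_path_component[OF S] this]
    show ?thesis
      by (simp add: component_part_diff)
  qed
  then have "component_classes tr n X z = component_classes tr n X z' \<longleftrightarrow>
               (\<forall>S\<in>path_components_of X. component_part S (z - z') \<in> qboundary_set tr n (subtopology X S))"
    by (auto simp: component_classes_def fun_eq_iff)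
  also have "\<dots> \<longleftrightarrow> z - z' \<in> qboundary_set tr n X"
    using qboundary_set_iff_component_parts z z' by (simp add: singular_chain_diff)
  also have "\<dots> \<longleftrightarrow> qhomology_class tr n X z = qhomology_class tr n X z'"
    using qhomology_class_eq_iff[OF continuous_op] z z' by simp
  finally show ?thesis .
qed

lemma carrier_sum_qhomology_groups:
  "carrier (sum_group (path_components_of X) (\<lambda>S. qhomology_group tr n (subtopology X S)))
    = {x \<in> (\<Pi>\<^sub>E S\<in>path_components_of X. qhomology_class tr n (subtopology X S) `
                  carrier (qcycle_group tr n (subtopology X S))).
         finite {S \<in> path_components_of X. x S \<noteq> qboundary_set tr n (subtopology X S)}}"
proof -
  have class_epi: "qhomology_class tr n (subtopology X S)
                     \<in> epi (qcycle_group tr n (subtopology X S)) (qhomology_group tr n (subtopology X S))"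
    "group (qhomology_group tr n (subtopology X S))" if "S \<in> path_components_of X" for S
    using qhomology_class_epi group_qhomology_group continuous_map_op_path_component[OF that]
    by auto
  have "carrier (qhomology_group tr n (subtopology X S))
          = qhomology_class tr n (subtopology X S) ` carrier (qcycle_group tr n (subtopology X S))"
    if "S \<in> path_components_of X" for S
    using class_epi(1)[OF that] by (simp add: epi_def)
  then show ?thesis
    using class_epi(2) by (simp add: carrier_sum_group qhomology_group_def cong: PiE_cong)
qed

lemma component_classes_hom:
  "component_classes tr n X
           \<in> hom (qcycle_group tr n X) (sum_group (path_components_of X) (\<lambda>S. qhomology_group tr n (subtopology X S)))"
proof (rule homI)
  fix z
  assume z: "z \<in> carrier (qcycle_group tr n X)"
  then have "singular_chain n X z"
    by simp
  then obtain F where F: "finite F" "\<And>S. S \<in> path_components_of X - F \<Longrightarrow> component_part S z = 0"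
    using singular_chain_decompose_path_components by metis
  then have "{S \<in> path_components_of X. component_classes tr n X z S \<noteq> qboundary_set tr n (subtopology X S)} \<subseteq> F"
    by (auto simp: component_classes_def)
  with F(1) have "finite {S \<in> path_components_of X. component_classes tr n X z S \<noteq> qboundary_set tr n (subtopology X S)}"
    by (rule finite_subset[rotated])
  moreover have "component_classes tr n X z \<in> (\<Pi>\<^sub>E S\<in>path_components_of X.
                   qhomology_class tr n (subtopology X S) ` carrier (qcycle_group tr n (subtopology X S)))"
    using component_part_qcycle[OF z] by (simp add: component_classes_def)
  ultimately show "component_classes tr n X z
                     \<in> carrier (sum_group (path_components_of X) (\<lambda>S. qhomology_group tr n (subtopology X S)))"
    by (simp add: carrier_sum_qhomology_groups)
next
  fix z z'
  assume z: "z \<in> carrier (qcycle_group tr n X)" and z': "z' \<in> carrier (qcycle_group tr n X)"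
  have "qhomology_class tr n (subtopology X S) (component_part S (z + z'))
        = qhomology_class tr n (subtopology X S) (component_part S z)
            \<otimes>\<^bsub>qhomology_group tr n (subtopology X S)\<^esub> qhomology_class tr n (subtopology X S) (component_part S z')"
    if S: "S \<in> path_components_of X" for S
  proof -
    have "qhomology_class tr n (subtopology X S)
            \<in> hom (qcycle_group tr n (subtopology X S)) (qhomology_group tr n (subtopology X S))"
      using qhomology_class_epi[OF continuous_map_op_path_component[OF S]]
      by (simp add: epi_def)
    from hom_mult[OF this component_part_qcycle[OF z S] component_part_qcycle[OF z' S]]
    show ?thesis
      by (simp add: component_part_add)
  qed
  then show "component_classes tr n X (z \<otimes>\<^bsub>qcycle_group tr n X\<^esub> z')
      = component_classes tr n X z
          \<otimes>\<^bsub>sum_group (path_components_of X) (\<lambda>S. qhomology_group tr n (subtopology X S))\<^esub>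
        component_classes tr n X z'"
    by (simp add: component_classes_def cong: restrict_cong)
qed

lemma component_classes_surj:
  assumes x: "x \<in> carrier (sum_group (path_components_of X) (\<lambda>S. qhomology_group tr n (subtopology X S)))"
  shows "x \<in> component_classes tr n X ` carrier (qcycle_group tr n X)"
proof -
  define F where "F = {S \<in> path_components_of X. x S \<noteq> qboundary_set tr n (subtopology X S)}"
  have F: "finite F" and x_ext: "x \<in> extensional (path_components_of X)"
    using x by (simp_all add: carrier_sum_qhomology_groups F_def PiE_def)
  have "\<exists>w. w \<in> carrier (qcycle_group tr n (subtopology X S)) \<and> x S = qhomology_class tr n (subtopology X S) w"
    if "S \<in> path_components_of X" for S
    using x that by (auto simp: carrier_sum_qhomology_groups PiE_iff)
  then obtain w where w: "\<And>S. S \<in> path_components_of X \<Longrightarrow> w S \<in> carrier (qcycle_group tr n (subtopology X S))"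
    and x_eq: "\<And>S. S \<in> path_components_of X \<Longrightarrow> x S = qhomology_class tr n (subtopology X S) (w S)"
    by metis
  define z where "z = (\<Sum>S\<in>F. w S)"
  have "singular_chain n X (w S)" "qboundary tr n (w S) = 0" if "S \<in> F" for S
    using w[of S] that by (auto simp: F_def singular_chain_subtopology)
  then have z: "z \<in> carrier (qcycle_group tr n X)"
    by (simp add: z_def qboundary_sum singular_chain_sum)
  have parts_z: "component_part T z = (if T \<in> F then w T else 0)" if "T \<in> path_components_of X" for T
    unfolding z_def using F w that by (intro component_part_sum_subtopology) (auto simp: F_def)
  have "component_classes tr n X z T = x T" for T
  proof (cases "T \<in> path_components_of X")
    case T: True
    show ?thesis
    proof (cases "T \<in> F")
      case True
      then show ?thesis
        by (simp add: component_classes_def parts_z T x_eq)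
    next
      case False
      then show ?thesis
        using T by (simp add: component_classes_def parts_z F_def)
    qed
  next
    case False
    then show ?thesis
      using x_ext by (simp add: component_classes_def extensional_def)
  qed
  then have "component_classes tr n X z = x"
    by (rule ext)
  then show ?thesis
    using z by (rule image_eqI[OF sym])
qed

lemma component_classes_epi:
  "component_classes tr n X
           \<in> epi (qcycle_group tr n X) (sum_group (path_components_of X) (\<lambda>S. qhomology_group tr n (subtopology X S)))"
  using component_classes_hom component_classes_surj
  by (auto simp: epi_def hom_def)

theorem qhomology_group_iso_sum_path_components:
  "qhomology_group tr n X \<cong>
           sum_group (path_components_of X) (\<lambda>S. qhomology_group tr n (subtopology X S))"
proof (rule iso_of_epis_with_same_fibres)
  show "monoid (qcycle_group tr n X)"
    by (simp add: qcycle_group_def group.is_monoid group.group_subgroup_generated)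
  show "qhomology_class tr n X \<in> epi (qcycle_group tr n X) (qhomology_group tr n X)"
    by (rule qhomology_class_epi[OF continuous_op])
  show "component_classes tr n X \<in> epi (qcycle_group tr n X)
          (sum_group (path_components_of X) (\<lambda>S. qhomology_group tr n (subtopology X S)))"
    by (rule component_classes_epi)
qed (simp add: component_classes_eq_iff)

end

theorem mainTheorem6:
  fixes X :: "'a topology" and tr :: "'a \<Rightarrow> 'a \<Rightarrow> 'a" and n :: nat
  assumes "topological_quandle X tr"
  shows "qhomology_group tr n X \<cong>
           sum_group (path_components_of X) (\<lambda>C. qhomology_group tr n (subtopology X C))"
proof -
  interpret continuous_idempotent_operation X tr
    using assms by unfold_locales (auto simp: topological_quandle_def quandle_on_def)
  show ?thesis
    by (rule qhomology_group_iso_sum_path_components)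
qed

end
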